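(* Assume the setting of the context. For any $\Delta=(h,\Delta x)$, any $i\in\mathbb{N}$, any $j\in\{1,2\}$, any bounded $\mathsf{U},\mathsf{V}\in B(\mathcal{A}^{\Delta x})$ with $\mathsf{U}_k\le\mathsf{V}_k$ for all $k\in\mathbb{N}$, and any $(\mathsf{q}_1,\mathsf{q}_2),(\mathsf{m}_1,\mathsf{m}_2)\in\mathbb{R}^2$ such that $\theta:=\mathsf{q}_j-\mathsf{m}_j=\max_{k=1,2}\{\mathsf{q}_k-\mathsf{m}_k\}\ge0$, we have $$\mathcal{F}^\Delta_j\big(x_i,(\mathsf{q}_j,\mathsf{q}_{\bar\jmath}),\mathsf{U}+\theta\big)-\mathcal{F}^\Delta_j\big(x_i,(\mathsf{m}_j,\mathsf{m}_{\bar\jmath}),\mathsf{V}\big)\ge\rho\theta.$$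
   Context: Constants: $\rho>0$, $r<\rho$, $0<y_1<y_2$, $\gamma>1$, $\underline{x}\le0$ with $\rho\underline{x}+y_j>0$, $\lambda_1,\lambda_2\ge0$; $\bar\jmath=3-j$; $u(c)=\frac{c^{1-\gamma}}{1-\gamma}$ for $c>0$, $u(0)=-\infty$. Discretization $\Delta=(h,\Delta x)$ with $h,\Delta x>0$ and $\rho h<1$, $\lambda_jh<1$. Grid $x_i=\underline{x}+i\Delta x$, $i\in\mathbb{N}=\{0,1,2,\dots\}$, $\mathcal{A}^{\Delta x}=\{x_i\}$; $B(\mathcal{A}^{\Delta x})$ is the space of bounded real sequences $(\mathsf{U}_k)_{k\in\mathbb{N}}$. The $\mathbb{Q}_1$ basis: $\beta_k(x)=\max\{0,1-|x-x_k|/\Delta x\}$ for $x\ge\underline{x}$ (so $\beta_k\ge0$, $\sum_k\beta_k\equiv1$ on $[\underline{x},\infty)$, $\beta_k(x_i)=\delta_{ik}$). Admissible controls $\mathcal{C}^\Delta_j(x_i)=\{c\ge0: x_i+h(rx_i+y_j-c)\ge\underline{x}\}$, and $s_{i,j}(c)=rx_i+y_j-c$. The scheme: for $(\mathsf{q}_j,\mathsf{q}_{\bar\jmath})\in\mathbb{R}^2$, $\mathsf{U}\in B(\mathcal{A}^{\Delta x})$, $$\mathcal{F}^\Delta_j(x_i,(\mathsf{q}_j,\mathsf{q}_{\bar\jmath}),\mathsf{U})=\rho\mathsf{q}_j-(1-\rho h)\lambda_j(\mathsf{q}_{\bar\jmath}-\mathsf{q}_j)-\sup_{c\in\mathcal{C}^\Delta_j(x_i)}\Big\{u(c)+\frac{(1-\rho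 h)(1-\lambda_jh)}{h}\Big(\sum_k\beta_k(x_i+hs_{i,j}(c))\mathsf{U}_k-\mathsf{q}_j\Big)\Big\}.$$ *)

theory Defs
  imports "HOL-Analysis.Analysis"
begin

definition grid :: "real \<Rightarrow> real \<Rightarrow> nat \<Rightarrow> real" where
  "grid xlow dx i = xlow + real i * dx"

definition qbasis :: "real \<Rightarrow> real \<Rightarrow> nat \<Rightarrow> real \<Rightarrow> real" where
  "qbasis xlow dx k x = max 0 (1 - \<bar>x - grid xlow dx k\<bar> / dx)"

definition util :: "real \<Rightarrow> real \<Rightarrow> ereal" where
  "util gamma c = (if c > 0 then ereal (c powr (1 - gamma) / (1 - gamma)) else -\<infinity>)"

definition admissible :: "real \<Rightarrow> real \<Rightarrow> real \<Rightarrow> real \<Rightarrow> real \<Rightarrow> real set" where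
  "admissible r xlow h y x = {c. c \<ge> 0 \<and> x + h * (r * x + y - c) \<ge> xlow}"

text \<open>The scheme F_j(x_i,(q_j,q_jbar),U); here y = y_j, lam = lambda_j,
  q = q_j, qb = q_jbar. Values in the extended reals (the supremum may be -infinity).\<close>
definition scheme ::
  "real \<Rightarrow> real \<Rightarrow> real \<Rightarrow> real \<Rightarrow> real \<Rightarrow> real \<Rightarrow> real \<Rightarrow> real \<Rightarrow>
   nat \<Rightarrow> real \<Rightarrow> real \<Rightarrow> (nat \<Rightarrow> real) \<Rightarrow> ereal" where
  "scheme rho r gamma xlow h dx y lam i q qb U =
     ereal (rho * q - (1 - rho * h) * lam * (qb - q))
     - (SUP c \<in> admissible r xlow h y (grid xlow dx i).
          util gamma c
          + ereal ((1 - rho * h) * (1 - lam * h) / h *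
              ((\<Sum>k. qbasis xlow dx k (grid xlow dx i + h * (r * grid xlow dx i + y - c)) * U k) - q)))"

end

theory Submission
  imports Defs
begin

text \<open>F is nonincreasing in the grid values U and in the neighbouring-regime value qb
  (its coefficients are nonnegative when \<rho>h, \<lambda>h \<le> 1), and it commutes with constants:
  the Q1 basis is a partition of unity at every point reachable by an admissible control, so
  adding t to q, qb and U adds exactly \<rho>t to F. With \<theta> = q_j - m_j, maximality of \<theta> gives
  q_jbar \<le> m_jbar + \<theta>, hence F(q, U + \<theta>) \<ge> F(m + \<theta>, V + \<theta>) = F(m, V) + \<rho>\<theta>.\<close>

lemma qbasis_nonneg: "0 \<le> qbasis xlow dx k z"
  by (simp add: qbasis_def)

lemma qbasis_rescaled:
  assumes "dx > 0"
  shows "qbasis xlow dx k z = max 0 (1 - \<bar>(z - xlow) / dx - real k\<bar>)"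
proof -
  have "\<bar>z - grid xlow dx k\<bar> / dx = \<bar>(z - grid xlow dx k) / dx\<bar>"
    using assms by simp
  also have "(z - grid xlow dx k) / dx = (z - xlow) / dx - real k"
    using assms by (simp add: grid_def field_simps)
  finally show ?thesis by (simp add: qbasis_def)
qed

lemma qbasis_two_point_support:
  assumes "dx > 0" and "xlow \<le> z"
  obtains n where "\<forall>k. k \<notin> {n, Suc n} \<longrightarrow> qbasis xlow dx k z = 0"
    and "qbasis xlow dx n z + qbasis xlow dx (Suc n) z = 1"
proof
  define t where "t = (z - xlow) / dx"
  define n where "n = nat \<lfloor>t\<rfloor>"
  have "t \<ge> 0" using assms by (simp add: t_def)
  then have n: "real n \<le> t" "t < real n + 1" unfolding n_def by linarith+
  have hat: "\<And>k. qbasis xlow dx k z = max 0 (1 - \<bar>t - real k\<bar>)"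
    using qbasis_rescaled[OF assms(1)] t_def by simp
  show "\<forall>k. k \<notin> {n, Suc n} \<longrightarrow> qbasis xlow dx k z = 0"
  proof (intro allI impI)
    fix k assume "k \<notin> {n, Suc n}"
    then have "real k + 1 \<le> real n \<or> real k \<ge> real n + 2" by auto
    then have "\<bar>t - real k\<bar> \<ge> 1" using n by linarith
    then show "qbasis xlow dx k z = 0" unfolding hat by simp
  qed
  show "qbasis xlow dx n z + qbasis xlow dx (Suc n) z = 1"
    unfolding hat using n by simp
qed

lemma qbasis_suminf_two_point:
  assumes "\<forall>k. k \<notin> {n, Suc n} \<longrightarrow> qbasis xlow dx k z = 0"
  shows "(\<Sum>k. qbasis xlow dx k z * f k)
           = qbasis xlow dx n z * f n + qbasis xlow dx (Suc n) z * f (Suc n)"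
proof -
  have "(\<Sum>k. qbasis xlow dx k z * f k) = (\<Sum>k\<in>{n, Suc n}. qbasis xlow dx k z * f k)"
    by (rule suminf_finite) (use assms in auto)
  then show ?thesis by simp
qed

lemma qbasis_interp_add_const:
  assumes "dx > 0" and "xlow \<le> z"
  shows "(\<Sum>k. qbasis xlow dx k z * (U k + c)) = (\<Sum>k. qbasis xlow dx k z * U k) + c"
proof -
  obtain n where supp: "\<forall>k. k \<notin> {n, Suc n} \<longrightarrow> qbasis xlow dx k z = 0"
    and unity: "qbasis xlow dx n z + qbasis xlow dx (Suc n) z = 1"
    using qbasis_two_point_support[OF assms] by blast
  have "(\<Sum>k. qbasis xlow dx k z * (U k + c))
          = qbasis xlow dx n z * (U n + c) + qbasis xlow dx (Suc n) z * (U (Suc n) + c)"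
    by (rule qbasis_suminf_two_point[OF supp])
  also have "\<dots> = qbasis xlow dx n z * U n + qbasis xlow dx (Suc n) z * U (Suc n)
                    + (qbasis xlow dx n z + qbasis xlow dx (Suc n) z) * c"
    by (simp add: algebra_simps)
  also have "\<dots> = (\<Sum>k. qbasis xlow dx k z * U k) + c"
    by (simp add: unity qbasis_suminf_two_point[OF supp])
  finally show ?thesis .
qed

lemma qbasis_interp_mono:
  assumes "dx > 0" and "xlow \<le> z" and "\<And>k. U k \<le> V k"
  shows "(\<Sum>k. qbasis xlow dx k z * U k) \<le> (\<Sum>k. qbasis xlow dx k z * V k)"
proof -
  obtain n where supp: "\<forall>k. k \<notin> {n, Suc n} \<longrightarrow> qbasis xlow dx k z = 0"
    using qbasis_two_point_support[OF assms(1,2)] by blast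
  show ?thesis
    unfolding qbasis_suminf_two_point[OF supp]
    by (intro add_mono mult_left_mono assms(3) qbasis_nonneg)
qed

lemma ereal_minus_add_real: "ereal a - S + ereal t = ereal (a + t) - S"
  by (cases S) auto

lemma scheme_add_const:
  assumes "dx > 0"
  shows "scheme rho r gamma xlow h dx y lam i (q + t) (qb + t) (\<lambda>k. U k + t)
           = scheme rho r gamma xlow h dx y lam i q qb U + ereal (rho * t)"
proof -
  let ?x = "grid xlow dx i"
  let ?z = "\<lambda>c. ?x + h * (r * ?x + y - c)"
  have interp: "(\<Sum>k. qbasis xlow dx k (?z c) * (U k + t)) - (q + t)
                  = (\<Sum>k. qbasis xlow dx k (?z c) * U k) - q"
    if "c \<in> admissible r xlow h y ?x" for c
    using that qbasis_interp_add_const[OF assms, where z = "?z c" and U = U and c = t]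
    by (simp add: admissible_def)
  have linear: "rho * (q + t) - (1 - rho * h) * lam * (qb + t - (q + t))
                  = rho * q - (1 - rho * h) * lam * (qb - q) + rho * t"
    by (simp add: algebra_simps)
  show ?thesis
    unfolding scheme_def ereal_minus_add_real linear by (simp only: interp cong: SUP_cong)
qed

lemma scheme_antimono_values:
  assumes "dx > 0" and "h > 0" and "rho * h \<le> 1" and "lam * h \<le> 1"
    and "\<And>k. U k \<le> V k"
  shows "scheme rho r gamma xlow h dx y lam i q qb V \<le> scheme rho r gamma xlow h dx y lam i q qb U"
proof -
  let ?x = "grid xlow dx i"
  let ?z = "\<lambda>c. ?x + h * (r * ?x + y - c)"
  let ?A = "(1 - rho * h) * (1 - lam * h) / h"
  have "?A \<ge> 0" using assms(2-4) by simp
  then have "?A * ((\<Sum>k. qbasis xlow dx k (?z c) * U k) - q)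
               \<le> ?A * ((\<Sum>k. qbasis xlow dx k (?z c) * V k) - q)"
    if "c \<in> admissible r xlow h y ?x" for c
    using that qbasis_interp_mono[OF assms(1) _ assms(5), where z = "?z c"]
    by (intro mult_left_mono) (auto simp: admissible_def)
  then have pointwise: "util gamma c + ereal (?A * ((\<Sum>k. qbasis xlow dx k (?z c) * U k) - q))
               \<le> util gamma c + ereal (?A * ((\<Sum>k. qbasis xlow dx k (?z c) * V k) - q))"
    if "c \<in> admissible r xlow h y ?x" for c
    using that by (intro add_left_mono) simp
  then show ?thesis
    unfolding scheme_def by (intro ereal_minus_mono order_refl SUP_subset_mono pointwise)
qed

lemma scheme_antimono_neighbour:
  assumes "rho * h \<le> 1" and "lam \<ge> 0" and "qb \<le> qb'"
  shows "scheme rho r gamma xlow h dx y lam i q qb' U \<le> scheme rho r gamma xlow h dx y lam i q qb U"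
proof -
  have "(1 - rho * h) * lam * (qb - q) \<le> (1 - rho * h) * lam * (qb' - q)"
    using assms by (intro mult_left_mono) auto
  then show ?thesis
    unfolding scheme_def by (intro ereal_minus_mono order_refl) simp
qed

theorem mainTheorem10:
  fixes rho r gamma xlow h dx :: real
    and y lam q m :: "nat \<Rightarrow> real"
    and U V :: "nat \<Rightarrow> real"
    and i j :: nat
  assumes rho_pos: "rho > 0" and r_lt: "r < rho"
    and y_pos: "0 < y 1" and y_lt: "y 1 < y 2"
    and gamma_gt: "gamma > 1"
    and xlow_le: "xlow \<le> 0"
    and budget: "\<And>jj. jj \<in> {1, 2} \<Longrightarrow> rho * xlow + y jj > 0"
    and lam_nonneg: "\<And>jj. jj \<in> {1, 2} \<Longrightarrow> lam jj \<ge> 0"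
    and h_pos: "h > 0" and dx_pos: "dx > 0"
    and rho_h: "rho * h < 1"
    and lam_h: "\<And>jj. jj \<in> {1, 2} \<Longrightarrow> lam jj * h < 1"
    and j_in: "j \<in> {1, 2}"
    and U_bdd: "bounded (range U)" and V_bdd: "bounded (range V)"
    and U_le_V: "\<And>k. U k \<le> V k"
    and theta_max: "q j - m j = max (q 1 - m 1) (q 2 - m 2)"
    and theta_nonneg: "q j - m j \<ge> 0"
  shows "scheme rho r gamma xlow h dx (y j) (lam j) i (q j) (q (3 - j)) (\<lambda>k. U k + (q j - m j))
         \<ge> scheme rho r gamma xlow h dx (y j) (lam j) i (m j) (m (3 - j)) V + ereal (rho * (q j - m j))"
proof -
  define \<theta> where "\<theta> = q j - m j"
  let ?F = "scheme rho r gamma xlow h dx (y j) (lam j) i"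
  have neighbour: "q (3 - j) \<le> m (3 - j) + \<theta>"
    using theta_max j_in unfolding \<theta>_def by auto
  have "?F (m j) (m (3 - j)) V + ereal (rho * \<theta>) = ?F (m j + \<theta>) (m (3 - j) + \<theta>) (\<lambda>k. V k + \<theta>)"
    by (rule scheme_add_const[OF dx_pos, symmetric])
  also have "\<dots> \<le> ?F (m j + \<theta>) (m (3 - j) + \<theta>) (\<lambda>k. U k + \<theta>)"
    using h_pos rho_h lam_h[OF j_in] U_le_V
    by (intro scheme_antimono_values[OF dx_pos]) auto
  also have "\<dots> \<le> ?F (q j) (q (3 - j)) (\<lambda>k. U k + \<theta>)"
    using rho_h lam_nonneg[OF j_in] neighbour
    by (simp add: \<theta>_def scheme_antimono_neighbour)
  finally show ?thesis unfolding \<theta>_def .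
qed

end
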